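(* Let $\mu$ be a probability measure on a set $\mathcal{X}$ and let $k:\mathcal{X}\times\mathcal{X}\to\mathbb{R}$ be a positive-definite kernel with real RKHS $\mathcal{H}$, satisfying $\sup_{x\in\mathcal{X}}\sqrt{k(x,x)}\le\kappa$ for some $\kappa>0$, and admitting a Mercer expansion $k(x,y)=\sum_{j=1}^\infty \sigma_j e_j(x)e_j(y)$ for all $x,y\in\mathcal{X}$, where $(e_j)_{j\ge1}$ is an orthonormal set in $L^2(\mu)$ and $\sigma_1\ge\sigma_2\ge\cdots\ge0$. Fix an integer $d\ge1$ and define $\bm\Phi_d(x):=(\sqrt{\sigma_1}e_1(x),\dots,\sqrt{\sigma_d}e_d(x))^\top\in\mathbb{R}^d$, $g_d(x):=\sqrt{\sum_{j>d}\sigma_j e_j(x)^2}$, and $\bm\Psi_d(x):=(\bm\Phi_d(x)^\top,g_d(x))^\top\in\mathbb{R}^{d+1}$. Let $x_1,\dots,x_N\in\mathcal{X}$, let $\bm w=(w_i)_{i=1}^N\in\Delta_N$, and define $Q_N(f):=\sum_{i=1}^N w_i f(x_i)$. If \[ \Bigl|\mathbb{E}_{x\sim\mu}[\bm\Psi_d(x)]-\sum_{i=1}^N w_i\bm\Psi_d(x_i)\Bigr|\le\varepsilon \] for some $\varepsilon\ge0$, then \[ \operatorname{wce}(Q_N;\mathcal{H},\mu)\le 2\int g_d(x)\,\mathrm{d}\mu(x)+\varepsilon\le 2\sqrt{\sum_{j>d}\sigma_j}+\varepsilon . \]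
   Context: $\Delta_N:=\{\bm w\in\mathbb{R}^N_{\ge0}:\sum_{i=1}^N w_i=1\}$ is the probability simplex and $|\cdot|$ is the Euclidean norm. For a quadrature rule $Q_N(f)=\sum_i w_i f(x_i)$, the worst-case error is $\operatorname{wce}(Q_N;\mathcal{H},\mu):=\sup_{\|f\|_{\mathcal{H}}\le1}\bigl|\int f\,\mathrm{d}\mu-Q_N(f)\bigr|$, which equals $\bigl\|m_\mu-\sum_{i}w_ik(x_i,\cdot)\bigr\|_{\mathcal{H}}$ where $m_\mu:=\int k(x,\cdot)\,\mathrm{d}\mu(x)\in\mathcal{H}$ is the kernel mean embedding. *)

theory Defs
  imports "HOL-Probability.Probability"
begin

text \<open>The RKHS is modelled by a real Hilbert space 'h together with a canonical
feature map Phi with k x y = Phi x \<bullet> Phi y and span (range Phi) dense; the RKHS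
function associated with h is x \<mapsto> h \<bullet> Phi x, and its RKHS norm is norm h.\<close>

definition rkhs_fun :: "('a \<Rightarrow> 'h::real_inner) \<Rightarrow> 'h \<Rightarrow> 'a \<Rightarrow> real" where
  "rkhs_fun Phi h = (\<lambda>y. h \<bullet> Phi y)"

definition quad :: "nat \<Rightarrow> (nat \<Rightarrow> real) \<Rightarrow> (nat \<Rightarrow> 'a) \<Rightarrow> ('a \<Rightarrow> real) \<Rightarrow> real" where
  "quad N w x f = (\<Sum>i<N. w i * f (x i))"

definition wce :: "nat \<Rightarrow> (nat \<Rightarrow> real) \<Rightarrow> (nat \<Rightarrow> 'a) \<Rightarrow> ('a \<Rightarrow> 'h::real_inner) \<Rightarrow> 'a measure \<Rightarrow> real" where
  "wce N w x Phi M =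
     (SUP h\<in>{h. norm h \<le> 1}. \<bar>(\<integral>y. rkhs_fun Phi h y \<partial>M) - quad N w x (rkhs_fun Phi h)\<bar>)"

definition prob_simplex :: "nat \<Rightarrow> (nat \<Rightarrow> real) set" where
  "prob_simplex N = {w. (\<forall>i<N. 0 \<le> w i) \<and> (\<Sum>i<N. w i) = 1}"

text \<open>Mercer eigenpairs indexed from 0: (sigma j, e j) is the paper's (sigma_{j+1}, e_{j+1}).\<close>
definition tail_fun :: "(nat \<Rightarrow> real) \<Rightarrow> (nat \<Rightarrow> 'a \<Rightarrow> real) \<Rightarrow> nat \<Rightarrow> 'a \<Rightarrow> real" where
  "tail_fun \<sigma> e d x = sqrt (\<Sum>j. \<sigma> (j + d) * (e (j + d) x)\<^sup>2)"

definition Psi_coord :: "(nat \<Rightarrow> real) \<Rightarrow> (nat \<Rightarrow> 'a \<Rightarrow> real) \<Rightarrow> nat \<Rightarrow> nat \<Rightarrow> 'a \<Rightarrow> real" where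
  "Psi_coord \<sigma> e d j x = (if j < d then sqrt (\<sigma> j) * e j x else tail_fun \<sigma> e d x)"

end

theory Submission
  imports Defs
begin

text \<open>Let \<open>u\<^sub>j\<close> represent \<open>h \<mapsto> \<langle>e\<^sub>j, \<langle>h, Phi\<rangle>\<rangle>\<^sub>L\<^sub>2 / \<surd>\<sigma>\<^sub>j\<close> (Riesz). Integrating the Mercer series
  against \<open>e\<^sub>j\<close> gives \<open>\<langle>u\<^sub>j, Phi y\<rangle> = \<surd>\<sigma>\<^sub>j e\<^sub>j(y)\<close>, so the \<open>u\<^sub>j\<close> are orthonormal (or zero), the
  first \<open>d\<close> coordinates of \<open>\<Psi>\<^sub>d\<close> are the functions \<open>\<langle>u\<^sub>j, Phi\<rangle>\<close>, and the part of \<open>Phi y\<close>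
  orthogonal to \<open>u\<^sub>0, \<dots>, u\<^sub>d\<^sub>-\<^sub>1\<close> has norm \<open>g\<^sub>d(y)\<close>. Splitting a unit vector \<open>h\<close> along the \<open>u\<^sub>j\<close>
  with remainder \<open>g\<close> gives \<open>\<langle>h, Phi\<rangle> = \<Sum>\<^sub>j \<langle>h, u\<^sub>j\<rangle> \<Psi>\<^sub>j + r\<close> with \<open>\<bar>r\<bar> \<le> \<parallel>g\<parallel> g\<^sub>d\<close>; Cauchy-Schwarz
  in \<open>\<real>\<^sup>d\<^sup>+\<^sup>1\<close> with \<open>\<parallel>g\<parallel>\<^sup>2 + \<Sum>\<^sub>j \<langle>h, u\<^sub>j\<rangle>\<^sup>2 \<le> 1\<close> bounds the quadrature error by \<open>2 \<integral> g\<^sub>d + \<epsilon>\<close>.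
  The second inequality is Jensen: \<open>(\<integral> g\<^sub>d)\<^sup>2 \<le> \<integral> g\<^sub>d\<^sup>2 = \<Sum>\<^sub>j\<^sub>\<ge>\<^sub>d \<sigma>\<^sub>j\<close>.

  Measurability of \<open>\<langle>h, Phi\<rangle>\<close> is not assumed: project \<open>h\<close> onto the closed subspace of those \<open>p\<close>
  for which \<open>\<langle>p, Phi\<rangle>\<close> is measurable; it contains every \<open>Phi z\<close> by the Mercer series.\<close>

lemma minimizing_sequence_Cauchy:
  fixes S :: "'a::real_inner set"
  assumes "convex S" and s_in: "\<And>n. s n \<in> S" and D_le: "\<And>y. y \<in> S \<Longrightarrow> D \<le> (norm (a - y))\<^sup>2"
    and s_less: "\<And>n. (norm (a - s n))\<^sup>2 < D + inverse (real (Suc n))"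
  shows "Cauchy s"
proof (rule metric_CauchyI)
  have close: "(norm (s m - s n))\<^sup>2 \<le> 2 * inverse (real (Suc m)) + 2 * inverse (real (Suc n))" for m n
  proof -
    have "(1/2) *\<^sub>R s m + (1/2) *\<^sub>R s n \<in> S"
      using assms(1) s_in by (intro convexD) auto
    then have "D \<le> (norm (a - ((1/2) *\<^sub>R s m + (1/2) *\<^sub>R s n)))\<^sup>2" by (rule D_le)
    moreover have "(norm (s m - s n))\<^sup>2
        = 2 * (norm (a - s m))\<^sup>2 + 2 * (norm (a - s n))\<^sup>2 - 4 * (norm (a - ((1/2) *\<^sub>R s m + (1/2) *\<^sub>R s n)))\<^sup>2"
      unfolding power2_norm_eq_inner by (simp add: algebra_simps inner_commute)
    ultimately show ?thesis using s_less[of m] s_less[of n] by linarith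
  qed
  fix \<epsilon> :: real assume "\<epsilon> > 0"
  obtain K :: nat where K: "4 / \<epsilon>\<^sup>2 < real K" using reals_Archimedean2 by blast
  have "dist (s m) (s n) < \<epsilon>" if "K \<le> m" "K \<le> n" for m n
  proof -
    have "inverse (real (Suc m)) \<le> inverse (real (Suc K))" "inverse (real (Suc n)) \<le> inverse (real (Suc K))"
      using that by (auto intro!: le_imp_inverse_le)
    moreover have "4 * inverse (real (Suc K)) < \<epsilon>\<^sup>2"
    proof -
      have "4 < real K * \<epsilon>\<^sup>2" using K \<open>\<epsilon> > 0\<close> by (simp add: field_simps)
      also have "\<dots> < real (Suc K) * \<epsilon>\<^sup>2" using \<open>\<epsilon> > 0\<close> by simp
      finally show ?thesis by (simp add: field_simps)
    qed
    ultimately have "(norm (s m - s n))\<^sup>2 < \<epsilon>\<^sup>2" using close[of m n] by linarith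
    then show ?thesis using \<open>\<epsilon> > 0\<close> by (simp add: dist_norm power_less_imp_less_base)
  qed
  then show "\<exists>K. \<forall>m\<ge>K. \<forall>n\<ge>K. dist (s m) (s n) < \<epsilon>" by blast
qed

lemma Hilbert_nearest_point_exists:
  fixes S :: "'a::{real_inner,complete_space} set"
  assumes "closed S" "convex S" "S \<noteq> {}"
  obtains p where "p \<in> S" "\<And>y. y \<in> S \<Longrightarrow> norm (a - p) \<le> norm (a - y)"
proof -
  define D where "D = (INF y\<in>S. (norm (a - y))\<^sup>2)"
  have bdd: "bdd_below ((\<lambda>y. (norm (a - y))\<^sup>2) ` S)"
    by (rule bdd_belowI[of _ 0]) auto
  have D_le: "D \<le> (norm (a - y))\<^sup>2" if "y \<in> S" for y
    unfolding D_def using bdd that by (rule cINF_lower)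
  have "\<exists>y\<in>S. (norm (a - y))\<^sup>2 < D + inverse (real (Suc n))" for n
  proof -
    have "D < D + inverse (real (Suc n))" by simp
    then show ?thesis using cINF_less_iff[OF assms(3) bdd] unfolding D_def by blast
  qed
  then obtain s where s: "\<And>n. s n \<in> S" "\<And>n. (norm (a - s n))\<^sup>2 < D + inverse (real (Suc n))"
    by metis
  then have "Cauchy s" using minimizing_sequence_Cauchy[OF assms(2) _ D_le] by blast
  then obtain p where p: "s \<longlonglongrightarrow> p" using Cauchy_convergent_iff convergent_def by blast
  show ?thesis
  proof
    show "p \<in> S" using assms(1) s(1) p closed_sequentially by blast
    fix y assume "y \<in> S"
    have "(\<lambda>n. (norm (a - s n))\<^sup>2) \<longlonglongrightarrow> (norm (a - p))\<^sup>2" using p by (intro tendsto_intros)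
    moreover have "(\<lambda>n. D + inverse (real (Suc n))) \<longlonglongrightarrow> D"
      using LIMSEQ_inverse_real_of_nat tendsto_add[of "\<lambda>_. D" D] by fastforce
    ultimately have "(norm (a - p))\<^sup>2 \<le> D"
      using s(2) by (intro LIMSEQ_le) (auto intro: less_imp_le)
    then have "(norm (a - p))\<^sup>2 \<le> (norm (a - y))\<^sup>2" using D_le[OF \<open>y \<in> S\<close>] by linarith
    then show "norm (a - p) \<le> norm (a - y)" by (rule power2_le_imp_le) simp
  qed
qed

lemma nearest_point_subspace_orthogonal:
  fixes W :: "'a::real_inner set"
  assumes "subspace W" "p \<in> W" "\<And>y. y \<in> W \<Longrightarrow> norm (a - p) \<le> norm (a - y)" "v \<in> W"
  shows "(a - p) \<bullet> v = 0"
proof (cases "v = 0")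
  case False
  define c where "c = (a - p) \<bullet> v"
  define t where "t = c / (v \<bullet> v)"
  have "p + t *\<^sub>R v \<in> W" using assms(1,2,4) by (simp add: subspace_add subspace_scale)
  then have "(norm (a - p))\<^sup>2 \<le> (norm ((a - p) - t *\<^sub>R v))\<^sup>2"
    using assms(3) by (simp add: diff_diff_eq power_mono)
  also have "\<dots> = (norm (a - p))\<^sup>2 - 2 * t * c + t\<^sup>2 * (v \<bullet> v)"
    unfolding power2_norm_eq_inner c_def by (simp add: algebra_simps inner_commute power2_eq_square)
  also have "\<dots> = (norm (a - p))\<^sup>2 - c\<^sup>2 / (v \<bullet> v)"
    using False unfolding t_def by (simp add: field_simps power2_eq_square)
  finally have "c\<^sup>2 / (v \<bullet> v) \<le> 0" by simp
  moreover have "0 < v \<bullet> v" using False by simp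
  ultimately have "c\<^sup>2 \<le> 0" by (simp add: divide_le_0_iff)
  then show ?thesis unfolding c_def by simp
qed simp

lemma orthogonal_projection_exists:
  fixes W :: "'a::{real_inner,complete_space} set"
  assumes "subspace W" "closed W"
  obtains p where "p \<in> W" "\<And>v. v \<in> W \<Longrightarrow> (a - p) \<bullet> v = 0"
proof -
  have "W \<noteq> {}" using assms(1) subspace_0 by blast
  then obtain p where "p \<in> W" "\<And>y. y \<in> W \<Longrightarrow> norm (a - p) \<le> norm (a - y)"
    using Hilbert_nearest_point_exists[OF assms(2) subspace_imp_convex[OF assms(1)]] by metis
  then show ?thesis using nearest_point_subspace_orthogonal[OF assms(1)] that by blast
qed

lemma Riesz_representation:
  fixes F :: "'a::{real_inner,complete_space} \<Rightarrow> real"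
  assumes "bounded_linear F"
  obtains u where "\<And>x. F x = u \<bullet> x"
proof (cases "\<forall>x. F x = 0")
  case True
  then show ?thesis using that[of 0] by simp
next
  case False
  interpret F: bounded_linear F by (rule assms)
  obtain a where "F a \<noteq> 0" using False by blast
  define K where "K = {x. F x = 0}"
  have "subspace K" unfolding K_def subspace_def by (simp add: F.add F.scale)
  moreover have "closed K" unfolding K_def
    by (intro closed_Collect_eq F.continuous_on continuous_on_id continuous_on_const)
  ultimately obtain p where "p \<in> K" and orth: "\<And>v. v \<in> K \<Longrightarrow> (a - p) \<bullet> v = 0"
    using orthogonal_projection_exists[of K a] by blast
  define z where "z = a - p"
  have orth_z: "z \<bullet> v = 0" if "v \<in> K" for v using orth[OF that] unfolding z_def .
  have Fz: "F z \<noteq> 0" using \<open>p \<in> K\<close> \<open>F a \<noteq> 0\<close> unfolding z_def K_def by (simp add: F.diff)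
  then have "z \<bullet> z \<noteq> 0" using F.zero by auto
  have "F x = ((F z / (z \<bullet> z)) *\<^sub>R z) \<bullet> x" for x
  proof -
    have "x - (F x / F z) *\<^sub>R z \<in> K" unfolding K_def using Fz by (simp add: F.diff F.scale)
    then have "z \<bullet> (x - (F x / F z) *\<^sub>R z) = 0" by (rule orth_z)
    then have "z \<bullet> x = (F x / F z) * (z \<bullet> z)" by (simp add: inner_diff_right)
    then show ?thesis using Fz \<open>z \<bullet> z \<noteq> 0\<close> by (simp add: field_simps)
  qed
  then show ?thesis by (rule that)
qed

lemma finite_orthonormal_residual_orthogonal:
  fixes u :: "nat \<Rightarrow> 'a::real_inner"
  assumes orth: "\<And>i j. u i \<bullet> u j = (if i = j \<and> P j then 1 else 0)" and "i < d"
  shows "(x - (\<Sum>j<d. (x \<bullet> u j) *\<^sub>R u j)) \<bullet> u i = 0"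
proof -
  have "(\<Sum>j<d. (x \<bullet> u j) * (u j \<bullet> u i)) = (\<Sum>j<d. if j = i then (if P i then x \<bullet> u i else 0) else 0)"
    by (intro sum.cong) (auto simp: orth)
  also have "\<dots> = x \<bullet> u i"
    using \<open>i < d\<close> orth[of i i] by (auto simp: inner_commute)
  finally show ?thesis by (simp add: inner_diff_left inner_sum_left)
qed

lemma finite_orthonormal_Pythagoras:
  fixes u :: "nat \<Rightarrow> 'a::real_inner"
  assumes "\<And>i j. u i \<bullet> u j = (if i = j \<and> P j then 1 else 0)"
  shows "(norm x)\<^sup>2 = (norm (x - (\<Sum>j<d. (x \<bullet> u j) *\<^sub>R u j)))\<^sup>2 + (\<Sum>j<d. (x \<bullet> u j)\<^sup>2)"
proof -
  define s where "s = (\<Sum>j<d. (x \<bullet> u j) *\<^sub>R u j)"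
  have "(x - s) \<bullet> s = 0"
    unfolding s_def using finite_orthonormal_residual_orthogonal[OF assms]
    by (simp add: inner_sum_right)
  moreover have "s \<bullet> s = (\<Sum>j<d. (x \<bullet> u j)\<^sup>2)"
  proof -
    have "s \<bullet> s = x \<bullet> s - (x - s) \<bullet> s" by (simp add: inner_diff_left)
    also have "(x - s) \<bullet> s = 0" by fact
    finally show ?thesis unfolding s_def by (simp add: inner_sum_right power2_eq_square)
  qed
  moreover have "(norm x)\<^sup>2 = (norm (x - s))\<^sup>2 + 2 * ((x - s) \<bullet> s) + s \<bullet> s"
    unfolding power2_norm_eq_inner by (simp add: inner_diff_left inner_diff_right inner_commute)
  ultimately show ?thesis unfolding s_def by simp
qed

lemma integrable_mult_of_square_integrable:
  fixes f g :: "'a \<Rightarrow> real"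
  assumes [measurable]: "f \<in> borel_measurable M" "g \<in> borel_measurable M"
    and "integrable M (\<lambda>y. (f y)\<^sup>2)" "integrable M (\<lambda>y. (g y)\<^sup>2)"
  shows "integrable M (\<lambda>y. f y * g y)"
proof (rule Bochner_Integration.integrable_bound)
  show "integrable M (\<lambda>y. (f y)\<^sup>2 + (g y)\<^sup>2)" using assms(3,4) by simp
  have "\<bar>f y * g y\<bar> \<le> (f y)\<^sup>2 + (g y)\<^sup>2" for y
  proof -
    have "2 * (\<bar>f y\<bar> * \<bar>g y\<bar>) \<le> (f y)\<^sup>2 + (g y)\<^sup>2"
      using sum_squares_bound[of "\<bar>f y\<bar>" "\<bar>g y\<bar>"] by simp
    moreover have "0 \<le> \<bar>f y\<bar> * \<bar>g y\<bar>" by simp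
    ultimately show ?thesis unfolding abs_mult by linarith
  qed
  then show "AE y in M. norm (f y * g y) \<le> norm ((f y)\<^sup>2 + (g y)\<^sup>2)" by simp
qed simp

lemma (in prob_space) square_integral_le_integral_square:
  fixes f :: "'a \<Rightarrow> real"
  assumes "integrable M f" "integrable M (\<lambda>y. (f y)\<^sup>2)"
  shows "(\<integral>y. f y \<partial>M)\<^sup>2 \<le> (\<integral>y. (f y)\<^sup>2 \<partial>M)"
  using variance_positive[of f] variance_eq[OF assms] by simp

lemma abs_sum_mult_le_L2_set:
  fixes a b :: "nat \<Rightarrow> real"
  shows "\<bar>\<Sum>j<d. a j * b j\<bar> + \<bar>c\<bar> * \<bar>b d\<bar> \<le> sqrt (c\<^sup>2 + (\<Sum>j<d. (a j)\<^sup>2)) * L2_set b {..d}"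
proof -
  define a' where "a' j = (if j < d then a j else c)" for j
  have "\<bar>\<Sum>j<d. a j * b j\<bar> + \<bar>c\<bar> * \<bar>b d\<bar> \<le> (\<Sum>j<d. \<bar>a j\<bar> * \<bar>b j\<bar>) + \<bar>c\<bar> * \<bar>b d\<bar>"
    using sum_abs[of "\<lambda>j. a j * b j" "{..<d}"] by (simp add: abs_mult)
  also have "\<dots> = (\<Sum>j\<in>{..d}. \<bar>a' j\<bar> * \<bar>b j\<bar>)"
    unfolding lessThan_Suc_atMost[symmetric] by (simp add: a'_def)
  also have "\<dots> \<le> L2_set a' {..d} * L2_set b {..d}" by (rule L2_set_mult_ineq)
  also have "L2_set a' {..d} = sqrt (c\<^sup>2 + (\<Sum>j<d. (a j)\<^sup>2))"
    unfolding L2_set_def lessThan_Suc_atMost[symmetric] by (simp add: a'_def add.commute)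
  finally show ?thesis .
qed

definition quad_error :: "'a measure \<Rightarrow> nat \<Rightarrow> (nat \<Rightarrow> real) \<Rightarrow> (nat \<Rightarrow> 'a) \<Rightarrow> ('a \<Rightarrow> real) \<Rightarrow> real"
  where "quad_error M N w x f = (\<integral>y. f y \<partial>M) - quad N w x f"

lemma quad_error_linear_combination:
  assumes "\<And>i. i < N \<Longrightarrow> x i \<in> space M"
    and "\<And>j. j < d \<Longrightarrow> integrable M (\<psi> j)" "integrable M r"
    and f_eq: "\<And>y. y \<in> space M \<Longrightarrow> f y = (\<Sum>j<d. a j * \<psi> j y) + r y"
  shows "quad_error M N w x f = (\<Sum>j<d. a j * quad_error M N w x (\<psi> j)) + quad_error M N w x r"
proof -
  have "(\<integral>y. f y \<partial>M) = (\<integral>y. (\<Sum>j<d. a j * \<psi> j y) + r y \<partial>M)"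
    using f_eq by (intro Bochner_Integration.integral_cong) auto
  also have "\<dots> = (\<integral>y. (\<Sum>j<d. a j * \<psi> j y) \<partial>M) + (\<integral>y. r y \<partial>M)"
    using assms(2,3) by (intro Bochner_Integration.integral_add) auto
  also have "(\<integral>y. (\<Sum>j<d. a j * \<psi> j y) \<partial>M) = (\<Sum>j<d. a j * (\<integral>y. \<psi> j y \<partial>M))"
    using assms(2) by (subst Bochner_Integration.integral_sum) auto
  finally have integral_f: "(\<integral>y. f y \<partial>M) = (\<Sum>j<d. a j * (\<integral>y. \<psi> j y \<partial>M)) + (\<integral>y. r y \<partial>M)" .
  have "quad N w x f = (\<Sum>i<N. \<Sum>j<d. w i * (a j * \<psi> j (x i))) + quad N w x r"
    unfolding quad_def using assms(1) f_eq by (simp add: sum_distrib_left distrib_left sum.distrib)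
  also have "\<dots> = (\<Sum>j<d. a j * quad N w x (\<psi> j)) + quad N w x r"
    unfolding quad_def by (subst sum.swap) (simp add: sum_distrib_left mult_ac)
  finally show ?thesis
    unfolding quad_error_def integral_f by (simp add: right_diff_distrib sum_subtractf)
qed

lemma abs_quad_error_le:
  assumes "w \<in> prob_simplex N" "\<And>i. i < N \<Longrightarrow> x i \<in> space M"
    and "integrable M r" "integrable M \<psi>" and r_le: "\<And>y. y \<in> space M \<Longrightarrow> \<bar>r y\<bar> \<le> \<beta> * \<psi> y"
  shows "\<bar>quad_error M N w x r\<bar> \<le> \<beta> * (2 * (\<integral>y. \<psi> y \<partial>M) - quad_error M N w x \<psi>)"
proof -
  have w_nonneg: "\<And>i. i < N \<Longrightarrow> 0 \<le> w i" using assms(1) unfolding prob_simplex_def by auto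
  have "\<bar>\<integral>y. r y \<partial>M\<bar> \<le> (\<integral>y. \<beta> * \<psi> y \<partial>M)"
    using assms(3,4) r_le by (intro order_trans[OF integral_abs_bound] integral_mono) auto
  moreover have "\<bar>quad N w x r\<bar> \<le> \<beta> * quad N w x \<psi>"
  proof -
    have "\<bar>quad N w x r\<bar> \<le> (\<Sum>i<N. w i * \<bar>r (x i)\<bar>)"
      unfolding quad_def using w_nonneg
      by (intro order_trans[OF sum_abs] sum_mono) (simp add: abs_mult)
    also have "\<dots> \<le> (\<Sum>i<N. w i * (\<beta> * \<psi> (x i)))"
      using w_nonneg assms(2) r_le by (intro sum_mono mult_left_mono) auto
    finally show ?thesis unfolding quad_def by (simp add: sum_distrib_left mult_ac)
  qed
  ultimately show ?thesis unfolding quad_error_def by (simp add: algebra_simps)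
qed

lemma abs_quad_error_le_L2_set:
  fixes f r :: "'a \<Rightarrow> real" and \<psi> :: "nat \<Rightarrow> 'a \<Rightarrow> real"
  assumes w: "w \<in> prob_simplex N" and x: "\<And>i. i < N \<Longrightarrow> x i \<in> space M"
    and \<psi>_integrable: "\<And>j. j \<le> d \<Longrightarrow> integrable M (\<psi> j)"
    and \<psi>_nonneg: "\<And>y. y \<in> space M \<Longrightarrow> 0 \<le> \<psi> d y"
    and f_eq: "\<And>y. y \<in> space M \<Longrightarrow> f y = (\<Sum>j<d. a j * \<psi> j y) + r y"
    and r_measurable: "r \<in> borel_measurable M"
    and r_le: "\<And>y. y \<in> space M \<Longrightarrow> \<bar>r y\<bar> \<le> \<beta> * \<psi> d y"
    and \<beta>_nonneg: "0 \<le> \<beta>" and coeffs: "\<beta>\<^sup>2 + (\<Sum>j<d. (a j)\<^sup>2) \<le> 1"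
  shows "\<bar>quad_error M N w x f\<bar>
    \<le> 2 * (\<integral>y. \<psi> d y \<partial>M) + L2_set (\<lambda>j. quad_error M N w x (\<psi> j)) {..d}"
proof -
  let ?E = "quad_error M N w x"
  have r_integrable: "integrable M r"
  proof (rule Bochner_Integration.integrable_bound)
    show "integrable M (\<lambda>y. \<beta> * \<psi> d y)" using \<psi>_integrable[of d] by simp
    show "AE y in M. norm (r y) \<le> norm (\<beta> * \<psi> d y)"
      using r_le by (intro AE_I2) (metis abs_ge_self order_trans real_norm_def)
  qed (rule r_measurable)
  have E_f: "?E f = (\<Sum>j<d. a j * ?E (\<psi> j)) + ?E r"
    using x \<psi>_integrable r_integrable f_eq by (intro quad_error_linear_combination) auto
  \<comment> \<open>The error on the remainder is absorbed into the last coordinate of the error vector.\<close>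
  have E_r: "\<bar>?E r\<bar> \<le> \<beta> * (2 * (\<integral>y. \<psi> d y \<partial>M) - ?E (\<psi> d))"
    using w x r_integrable \<psi>_integrable[OF order_refl] r_le by (rule abs_quad_error_le)
  have "\<beta>\<^sup>2 \<le> 1" using coeffs sum_nonneg[of "{..<d}" "\<lambda>j. (a j)\<^sup>2"] by simp
  then have "\<beta> * (\<integral>y. \<psi> d y \<partial>M) \<le> (\<integral>y. \<psi> d y \<partial>M)"
    using \<beta>_nonneg \<psi>_nonneg by (intro mult_left_le_one_le integral_nonneg) (auto simp: power_le_one_iff)
  moreover have "- (\<beta> * ?E (\<psi> d)) \<le> \<beta> * \<bar>?E (\<psi> d)\<bar>"
    using mult_left_mono[OF abs_ge_minus_self \<beta>_nonneg] by simp
  moreover have "\<bar>\<Sum>j<d. a j * ?E (\<psi> j)\<bar> + \<beta> * \<bar>?E (\<psi> d)\<bar> \<le> L2_set (\<lambda>j. ?E (\<psi> j)) {..d}"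
  proof -
    have "\<bar>\<Sum>j<d. a j * ?E (\<psi> j)\<bar> + \<beta> * \<bar>?E (\<psi> d)\<bar>
        \<le> sqrt (\<beta>\<^sup>2 + (\<Sum>j<d. (a j)\<^sup>2)) * L2_set (\<lambda>j. ?E (\<psi> j)) {..d}"
      using abs_sum_mult_le_L2_set[where a=a and b="\<lambda>j. ?E (\<psi> j)" and c=\<beta> and d=d] \<beta>_nonneg
      by simp
    also have "\<dots> \<le> L2_set (\<lambda>j. ?E (\<psi> j)) {..d}"
      using coeffs by (intro mult_left_le_one_le L2_set_nonneg) (simp_all add: sum_nonneg)
    finally show ?thesis .
  qed
  ultimately show ?thesis
    using E_f E_r abs_triangle_ineq[of "\<Sum>j<d. a j * ?E (\<psi> j)" "?E r"] by (simp add: algebra_simps)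
qed

locale Mercer_expansion = prob_space M
  for M :: "'a measure" +
  fixes Phi :: "'a \<Rightarrow> 'h::{real_inner,complete_space}"
    and \<kappa> :: real
    and \<sigma> :: "nat \<Rightarrow> real"
    and e :: "nat \<Rightarrow> 'a \<Rightarrow> real"
  assumes norm_Phi_le: "\<And>y. y \<in> space M \<Longrightarrow> norm (Phi y) \<le> \<kappa>"
    and e_measurable [measurable]: "\<And>j. e j \<in> borel_measurable M"
    and e_square_integrable: "\<And>j. integrable M (\<lambda>y. (e j y)\<^sup>2)"
    and e_orthonormal: "\<And>i j. (\<integral>y. e i y * e j y \<partial>M) = (if i = j then 1 else 0)"
    and \<sigma>_nonneg: "\<And>j. 0 \<le> \<sigma> j"
    and Mercer_sums: "\<And>y z. y \<in> space M \<Longrightarrow> z \<in> space M \<Longrightarrow>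
      (\<lambda>j. \<sigma> j * e j y * e j z) sums (Phi y \<bullet> Phi z)"
begin

lemma kappa_nonneg: "0 \<le> \<kappa>"
  using not_empty norm_Phi_le norm_ge_zero order_trans by blast

lemma square_norm_Phi_le: "y \<in> space M \<Longrightarrow> (norm (Phi y))\<^sup>2 \<le> \<kappa>\<^sup>2"
  using norm_Phi_le by (simp add: power_mono)

lemma Mercer_diagonal_sums: "y \<in> space M \<Longrightarrow> (\<lambda>j. \<sigma> j * (e j y)\<^sup>2) sums (norm (Phi y))\<^sup>2"
  unfolding power2_norm_eq_inner using Mercer_sums[of y y] by (simp add: power2_eq_square mult.assoc)

lemma partial_Mercer_diagonal_le:
  assumes "y \<in> space M"
  shows "(\<Sum>j<n. \<sigma> j * (e j y)\<^sup>2) \<le> (norm (Phi y))\<^sup>2"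
  using Mercer_diagonal_sums[OF assms] \<sigma>_nonneg
  by (intro sum_le_suminf[of _ "{..<n}", THEN order_trans]) (auto simp: sums_iff)

lemma abs_partial_Mercer_le:
  assumes "y \<in> space M" "z \<in> space M"
  shows "\<bar>\<Sum>j<n. \<sigma> j * e j y * e j z\<bar> \<le> \<kappa>\<^sup>2"
proof -
  have sqrt_mult: "(sqrt (\<sigma> j) * a) * (sqrt (\<sigma> j) * b) = \<sigma> j * a * b" for j a b
  proof -
    have "(sqrt (\<sigma> j) * a) * (sqrt (\<sigma> j) * b) = (sqrt (\<sigma> j) * sqrt (\<sigma> j)) * a * b"
      by (simp only: mult_ac)
    then show ?thesis using \<sigma>_nonneg[of j] by simp
  qed
  have "(\<Sum>j<n. \<sigma> j * e j y * e j z)\<^sup>2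
      = (\<Sum>j<n. (sqrt (\<sigma> j) * e j y) * (sqrt (\<sigma> j) * e j z))\<^sup>2"
    by (simp only: sqrt_mult)
  also have "\<dots> \<le> (\<Sum>j<n. (sqrt (\<sigma> j) * e j y)\<^sup>2) * (\<Sum>j<n. (sqrt (\<sigma> j) * e j z)\<^sup>2)"
    by (rule Cauchy_Schwarz_ineq_sum)
  also have "\<dots> = (\<Sum>j<n. \<sigma> j * (e j y)\<^sup>2) * (\<Sum>j<n. \<sigma> j * (e j z)\<^sup>2)"
    by (simp add: power_mult_distrib \<sigma>_nonneg)
  also have "\<dots> \<le> \<kappa>\<^sup>2 * \<kappa>\<^sup>2"
    using partial_Mercer_diagonal_le square_norm_Phi_le assms \<sigma>_nonneg
    by (intro mult_mono sum_nonneg) (auto intro: order_trans)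
  finally have "(\<Sum>j<n. \<sigma> j * e j y * e j z)\<^sup>2 \<le> (\<kappa>\<^sup>2)\<^sup>2"
    by (simp only: power2_eq_square[of "\<kappa>\<^sup>2"])
  then have "sqrt ((\<Sum>j<n. \<sigma> j * e j y * e j z)\<^sup>2) \<le> sqrt ((\<kappa>\<^sup>2)\<^sup>2)"
    by (rule real_sqrt_le_mono)
  then show ?thesis by (simp only: real_sqrt_abs abs_power2)
qed

lemma integrable_e: "integrable M (e j)"
  by (rule square_integrable_imp_integrable) (simp_all add: e_square_integrable)

lemma integrable_e_mult: "integrable M (\<lambda>y. e i y * e j y)"
  by (rule integrable_mult_of_square_integrable) (simp_all add: e_square_integrable)

lemma borel_measurable_inner_Phi [measurable]: "(\<lambda>y. h \<bullet> Phi y) \<in> borel_measurable M"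
proof -
  define S where "S = {p. (\<lambda>y. p \<bullet> Phi y) \<in> borel_measurable M}"
  have "subspace S" unfolding subspace_def S_def by (simp add: inner_add_left)
  moreover have "closed S"
    unfolding closed_sequential_limits
  proof (intro allI impI)
    fix s l assume lim: "(\<forall>n. s n \<in> S) \<and> s \<longlonglongrightarrow> l"
    show "l \<in> S" unfolding S_def mem_Collect_eq
    proof (rule borel_measurable_LIMSEQ_real[where u="\<lambda>n y. s n \<bullet> Phi y"])
      show "(\<lambda>n. s n \<bullet> Phi y) \<longlonglongrightarrow> l \<bullet> Phi y" for y using lim by (intro tendsto_intros) auto
      show "(\<lambda>y. s n \<bullet> Phi y) \<in> borel_measurable M" for n using lim unfolding S_def by auto
    qed
  qed
  ultimately obtain p where "p \<in> S" and orth: "\<And>v. v \<in> S \<Longrightarrow> (h - p) \<bullet> v = 0"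
    using orthogonal_projection_exists[of S h] by blast
  have "Phi z \<in> S" if "z \<in> space M" for z
  proof -
    have "(\<lambda>y. \<Sum>j. \<sigma> j * e j z * e j y) \<in> borel_measurable M" by measurable
    moreover have "\<And>y. y \<in> space M \<Longrightarrow> (\<Sum>j. \<sigma> j * e j z * e j y) = Phi z \<bullet> Phi y"
      using Mercer_sums[OF that] by (simp add: sums_iff)
    ultimately show ?thesis unfolding S_def by (simp cong: measurable_cong)
  qed
  then have "\<And>y. y \<in> space M \<Longrightarrow> h \<bullet> Phi y = p \<bullet> Phi y"
    using orth by (simp add: inner_diff_left)
  then show ?thesis using \<open>p \<in> S\<close> unfolding S_def by (simp cong: measurable_cong)
qed

lemma abs_inner_Phi_le: "y \<in> space M \<Longrightarrow> \<bar>h \<bullet> Phi y\<bar> \<le> \<kappa> * norm h"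
  using Cauchy_Schwarz_ineq2[of h "Phi y"] norm_Phi_le[of y]
  by (metis mult.commute mult_left_mono norm_ge_zero order_trans)

lemma abs_e_mult_inner_Phi_le:
  "z \<in> space M \<Longrightarrow> \<bar>e j z * (h \<bullet> Phi z)\<bar> \<le> \<kappa> * norm h * \<bar>e j z\<bar>"
  using mult_left_mono[OF abs_inner_Phi_le[of z h] abs_ge_zero[of "e j z"]]
  by (simp add: abs_mult mult.commute)

lemma integrable_e_mult_inner_Phi: "integrable M (\<lambda>z. e j z * (h \<bullet> Phi z))"
proof (rule Bochner_Integration.integrable_bound)
  show "integrable M (\<lambda>z. \<kappa> * norm h * \<bar>e j z\<bar>)" using integrable_e by simp
  show "AE z in M. norm (e j z * (h \<bullet> Phi z)) \<le> norm (\<kappa> * norm h * \<bar>e j z\<bar>)"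
    using abs_e_mult_inner_Phi_le kappa_nonneg by (intro AE_I2) (simp add: abs_mult)
qed simp

lemma integral_e_mult_Mercer:
  assumes y: "y \<in> space M"
  shows "(\<integral>z. e j z * (Phi y \<bullet> Phi z) \<partial>M) = \<sigma> j * e j y"
proof -
  define s where "s n z = e j z * (\<Sum>i<n. \<sigma> i * e i y * e i z)" for n z
  have "integral\<^sup>L M (s n) = (\<Sum>i<n. \<sigma> i * e i y * (\<integral>z. e j z * e i z \<partial>M))" for n
  proof -
    have "s n = (\<lambda>z. \<Sum>i<n. \<sigma> i * e i y * (e j z * e i z))"
      unfolding s_def by (simp add: sum_distrib_left mult_ac)
    then show ?thesis by (simp add: integrable_e_mult)
  qed
  then have "integral\<^sup>L M (s n) = \<sigma> j * e j y" if "j < n" for n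
    using that by (simp add: e_orthonormal if_distrib[of "\<lambda>t. _ * t"] cong: if_cong)
  then have "(\<lambda>n. integral\<^sup>L M (s n)) \<longlonglongrightarrow> \<sigma> j * e j y"
    by (intro tendsto_eventually eventually_sequentiallyI[of "Suc j"]) auto
  moreover have "(\<lambda>n. integral\<^sup>L M (s n)) \<longlonglongrightarrow> (\<integral>z. e j z * (Phi y \<bullet> Phi z) \<partial>M)"
  proof (rule integral_dominated_convergence[where w="\<lambda>z. \<kappa>\<^sup>2 * \<bar>e j z\<bar>"])
    show "(\<lambda>z. e j z * (Phi y \<bullet> Phi z)) \<in> borel_measurable M" by measurable
    show "s n \<in> borel_measurable M" for n unfolding s_def by measurable
    show "integrable M (\<lambda>z. \<kappa>\<^sup>2 * \<bar>e j z\<bar>)" using integrable_e by simp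
    show "AE z in M. (\<lambda>n. s n z) \<longlonglongrightarrow> e j z * (Phi y \<bullet> Phi z)"
      using Mercer_sums[OF y] unfolding s_def sums_def by (intro AE_I2 tendsto_mult tendsto_const) auto
    have "\<bar>s n z\<bar> \<le> \<kappa>\<^sup>2 * \<bar>e j z\<bar>" if "z \<in> space M" for n z
      using mult_left_mono[OF abs_partial_Mercer_le[OF y that, of n] abs_ge_zero[of "e j z"]]
      unfolding s_def by (simp add: abs_mult mult.commute)
    then show "AE z in M. norm (s n z) \<le> \<kappa>\<^sup>2 * \<bar>e j z\<bar>" for n by simp
  qed
  ultimately show ?thesis using LIMSEQ_unique by blast
qed

lemma bounded_linear_integral_e_mult_inner_Phi:
  "bounded_linear (\<lambda>h. \<integral>z. e j z * (h \<bullet> Phi z) \<partial>M)"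
proof (rule bounded_linear_intro[where K="\<kappa> * (\<integral>z. \<bar>e j z\<bar> \<partial>M)"])
  show "(\<integral>z. e j z * ((a + b) \<bullet> Phi z) \<partial>M)
      = (\<integral>z. e j z * (a \<bullet> Phi z) \<partial>M) + (\<integral>z. e j z * (b \<bullet> Phi z) \<partial>M)" for a b
    by (simp add: inner_add_left distrib_left integrable_e_mult_inner_Phi)
  show "(\<integral>z. e j z * ((r *\<^sub>R a) \<bullet> Phi z) \<partial>M) = r *\<^sub>R (\<integral>z. e j z * (a \<bullet> Phi z) \<partial>M)" for r a
    by (simp add: mult.left_commute)
  show "norm (\<integral>z. e j z * (a \<bullet> Phi z) \<partial>M) \<le> norm a * (\<kappa> * (\<integral>z. \<bar>e j z\<bar> \<partial>M))" for a
  proof -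
    have "\<bar>\<integral>z. e j z * (a \<bullet> Phi z) \<partial>M\<bar> \<le> (\<integral>z. \<kappa> * norm a * \<bar>e j z\<bar> \<partial>M)"
      using integrable_e_mult_inner_Phi integrable_e abs_e_mult_inner_Phi_le
      by (intro order_trans[OF integral_abs_bound] integral_mono) auto
    then show ?thesis by (simp add: mult_ac)
  qed
qed

text \<open>The paper's \<open>\<surd>\<sigma>\<^sub>j e\<^sub>j\<close> as an element of the Hilbert space: the Riesz representer of
  \<open>h \<mapsto> \<langle>e\<^sub>j, \<langle>h, Phi\<rangle>\<rangle>\<^sub>L\<^sub>2 / \<surd>\<sigma>\<^sub>j\<close>. When \<open>\<sigma>\<^sub>j = 0\<close> the division by zero makes it \<open>0\<close>.\<close>

definition eigenfeature :: "nat \<Rightarrow> 'h" where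
  "eigenfeature j = (SOME u. \<forall>h. u \<bullet> h = (\<integral>z. e j z * (h \<bullet> Phi z) \<partial>M) / sqrt (\<sigma> j))"

lemma inner_eigenfeature: "eigenfeature j \<bullet> h = (\<integral>z. e j z * (h \<bullet> Phi z) \<partial>M) / sqrt (\<sigma> j)"
proof -
  have "bounded_linear (\<lambda>h. (\<integral>z. e j z * (h \<bullet> Phi z) \<partial>M) / sqrt (\<sigma> j))"
    using bounded_linear_divide bounded_linear_integral_e_mult_inner_Phi by (rule bounded_linear_compose)
  then obtain u where "\<And>h. (\<integral>z. e j z * (h \<bullet> Phi z) \<partial>M) / sqrt (\<sigma> j) = u \<bullet> h"
    using Riesz_representation by blast
  then have "\<exists>u. \<forall>h. u \<bullet> h = (\<integral>z. e j z * (h \<bullet> Phi z) \<partial>M) / sqrt (\<sigma> j)" by metis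
  then show ?thesis unfolding eigenfeature_def by (rule someI_ex[THEN spec])
qed

lemma eigenfeature_inner_Phi: "y \<in> space M \<Longrightarrow> eigenfeature j \<bullet> Phi y = sqrt (\<sigma> j) * e j y"
  using inner_eigenfeature[of j "Phi y"] integral_e_mult_Mercer[of y j] \<sigma>_nonneg[of j]
  by (simp add: real_div_sqrt flip: times_divide_eq_left)

lemma eigenfeature_orthonormal:
  "eigenfeature i \<bullet> eigenfeature j = (if i = j \<and> \<sigma> j \<noteq> 0 then 1 else 0)"
proof -
  have "(\<integral>z. e i z * (eigenfeature j \<bullet> Phi z) \<partial>M) = (\<integral>z. sqrt (\<sigma> j) * (e i z * e j z) \<partial>M)"
    by (rule Bochner_Integration.integral_cong) (simp_all add: eigenfeature_inner_Phi mult_ac)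
  then have "eigenfeature i \<bullet> eigenfeature j = sqrt (\<sigma> j) * (if i = j then 1 else 0) / sqrt (\<sigma> i)"
    by (simp add: inner_eigenfeature e_orthonormal)
  then show ?thesis using \<sigma>_nonneg[of j] by auto
qed

lemma tail_fun_eq:
  assumes "y \<in> space M"
  shows "tail_fun \<sigma> e d y = sqrt ((norm (Phi y))\<^sup>2 - (\<Sum>j<d. \<sigma> j * (e j y)\<^sup>2))"
  using sums_split_initial_segment[OF Mercer_diagonal_sums[OF assms], of d]
  unfolding tail_fun_def by (simp add: sums_iff)

lemma tail_fun_nonneg: "y \<in> space M \<Longrightarrow> 0 \<le> tail_fun \<sigma> e d y"
  using partial_Mercer_diagonal_le by (simp add: tail_fun_eq)

lemma square_tail_fun:
  "y \<in> space M \<Longrightarrow> (tail_fun \<sigma> e d y)\<^sup>2 = (norm (Phi y))\<^sup>2 - (\<Sum>j<d. \<sigma> j * (e j y)\<^sup>2)"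
  using partial_Mercer_diagonal_le by (simp add: tail_fun_eq)

lemma tail_fun_le: "y \<in> space M \<Longrightarrow> tail_fun \<sigma> e d y \<le> \<kappa>"
proof -
  assume y: "y \<in> space M"
  have "(\<Sum>j<d. \<sigma> j * (e j y)\<^sup>2) \<ge> 0" by (simp add: sum_nonneg \<sigma>_nonneg)
  then have "tail_fun \<sigma> e d y \<le> sqrt ((norm (Phi y))\<^sup>2)"
    unfolding tail_fun_eq[OF y] by (intro real_sqrt_le_mono) linarith
  then show ?thesis using norm_Phi_le[OF y] by simp
qed

lemma borel_measurable_tail_fun [measurable]: "tail_fun \<sigma> e d \<in> borel_measurable M"
  unfolding tail_fun_def by measurable

lemma integrable_tail_fun: "integrable M (tail_fun \<sigma> e d)"
  using tail_fun_nonneg tail_fun_le by (intro integrable_const_bound[where B=\<kappa>]) auto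

lemma integrable_square_tail_fun: "integrable M (\<lambda>y. (tail_fun \<sigma> e d y)\<^sup>2)"
  using tail_fun_nonneg tail_fun_le
  by (intro integrable_const_bound[where B="\<kappa>\<^sup>2"]) (auto intro!: AE_I2 power_mono)

lemma norm_residual_Phi:
  assumes "y \<in> space M"
  shows "norm (Phi y - (\<Sum>j<d. (Phi y \<bullet> eigenfeature j) *\<^sub>R eigenfeature j)) = tail_fun \<sigma> e d y"
proof -
  have "(\<Sum>j<d. (Phi y \<bullet> eigenfeature j)\<^sup>2) = (\<Sum>j<d. \<sigma> j * (e j y)\<^sup>2)"
    using assms \<sigma>_nonneg
    by (intro sum.cong refl) (subst inner_commute, simp add: eigenfeature_inner_Phi power_mult_distrib)
  then have "(norm (Phi y - (\<Sum>j<d. (Phi y \<bullet> eigenfeature j) *\<^sub>R eigenfeature j)))\<^sup>2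
      = (tail_fun \<sigma> e d y)\<^sup>2"
    using finite_orthonormal_Pythagoras[OF eigenfeature_orthonormal, of "Phi y" d]
      square_tail_fun[OF assms] by simp
  then show ?thesis using tail_fun_nonneg[OF assms] by (simp add: power2_eq_iff_nonneg)
qed

lemma abs_inner_Phi_orthogonal_le:
  assumes "\<And>j. j < d \<Longrightarrow> g \<bullet> eigenfeature j = 0" "y \<in> space M"
  shows "\<bar>g \<bullet> Phi y\<bar> \<le> norm g * tail_fun \<sigma> e d y"
proof -
  have "g \<bullet> Phi y = g \<bullet> (Phi y - (\<Sum>j<d. (Phi y \<bullet> eigenfeature j) *\<^sub>R eigenfeature j))"
    using assms(1) by (simp add: inner_diff_right inner_sum_right)
  then show ?thesis using Cauchy_Schwarz_ineq2 norm_residual_Phi[OF assms(2)] by metis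
qed

lemma summable_\<sigma>: "summable \<sigma>"
proof (rule summableI_nonneg_bounded[where x="\<kappa>\<^sup>2"])
  fix n
  have "(\<Sum>j<n. \<sigma> j) = (\<integral>y. (\<Sum>j<n. \<sigma> j * (e j y)\<^sup>2) \<partial>M)"
    by (simp add: integrable_e_mult e_orthonormal power2_eq_square)
  also have "\<dots> \<le> (\<integral>y. \<kappa>\<^sup>2 \<partial>M)"
    using order_trans[OF partial_Mercer_diagonal_le square_norm_Phi_le]
    by (intro integral_mono) (auto simp: e_square_integrable)
  finally show "(\<Sum>j<n. \<sigma> j) \<le> \<kappa>\<^sup>2" by (simp add: prob_space)
qed (rule \<sigma>_nonneg)

lemma integral_square_tail_fun: "(\<integral>y. (tail_fun \<sigma> e d y)\<^sup>2 \<partial>M) = (\<Sum>j. \<sigma> (j + d))"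
proof -
  have tail_sums: "(\<lambda>j. \<sigma> (j + d) * (e (j + d) y)\<^sup>2) sums (tail_fun \<sigma> e d y)\<^sup>2" if "y \<in> space M" for y
    using sums_split_initial_segment[OF Mercer_diagonal_sums[OF that], of d] square_tail_fun[OF that]
    by simp
  have "(\<integral>y. (tail_fun \<sigma> e d y)\<^sup>2 \<partial>M) = (\<integral>y. (\<Sum>j. \<sigma> (j + d) * (e (j + d) y)\<^sup>2) \<partial>M)"
    using tail_sums by (intro Bochner_Integration.integral_cong) (auto simp: sums_iff)
  also have "\<dots> = (\<Sum>j. (\<integral>y. \<sigma> (j + d) * (e (j + d) y)\<^sup>2 \<partial>M))"
  proof (rule integral_suminf)
    show "integrable M (\<lambda>y. \<sigma> (j + d) * (e (j + d) y)\<^sup>2)" for j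
      using e_square_integrable by simp
    show "AE y in M. summable (\<lambda>j. norm (\<sigma> (j + d) * (e (j + d) y)\<^sup>2))"
      using tail_sums \<sigma>_nonneg by (intro AE_I2) (auto simp: sums_iff)
    show "summable (\<lambda>j. \<integral>y. norm (\<sigma> (j + d) * (e (j + d) y)\<^sup>2) \<partial>M)"
      using summable_\<sigma> \<sigma>_nonneg e_orthonormal
      by (simp add: summable_iff_shift abs_mult power2_eq_square)
  qed
  also have "\<dots> = (\<Sum>j. \<sigma> (j + d))"
    by (simp add: e_orthonormal power2_eq_square)
  finally show ?thesis .
qed

lemma integral_tail_fun_le: "(\<integral>y. tail_fun \<sigma> e d y \<partial>M) \<le> sqrt (\<Sum>j. \<sigma> (j + d))"
  using square_integral_le_integral_square[OF integrable_tail_fun integrable_square_tail_fun]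
  by (simp add: integral_square_tail_fun real_le_rsqrt)

lemma abs_quad_error_rkhs_fun_le:
  assumes w: "w \<in> prob_simplex N" and x: "\<And>i. i < N \<Longrightarrow> x i \<in> space M" and h: "norm h \<le> 1"
  shows "\<bar>quad_error M N w x (rkhs_fun Phi h)\<bar>
    \<le> 2 * (\<integral>y. tail_fun \<sigma> e d y \<partial>M) + L2_set (\<lambda>j. quad_error M N w x (Psi_coord \<sigma> e d j)) {..d}"
proof -
  define g where "g = h - (\<Sum>j<d. (h \<bullet> eigenfeature j) *\<^sub>R eigenfeature j)"
  have Psi_d: "Psi_coord \<sigma> e d d = tail_fun \<sigma> e d"
    by (simp add: Psi_coord_def [abs_def])
  have Psi_integrable: "integrable M (Psi_coord \<sigma> e d j)" if "j \<le> d" for j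
    using integrable_e integrable_tail_fun by (cases "j < d") (simp_all add: Psi_coord_def [abs_def])
  have decomp: "rkhs_fun Phi h y
      = (\<Sum>j<d. (h \<bullet> eigenfeature j) * Psi_coord \<sigma> e d j y) + g \<bullet> Phi y" if y: "y \<in> space M" for y
  proof -
    have "Psi_coord \<sigma> e d j y = eigenfeature j \<bullet> Phi y" if "j < d" for j
      using that y by (simp add: Psi_coord_def eigenfeature_inner_Phi)
    then show ?thesis unfolding rkhs_fun_def g_def by (simp add: inner_diff_left inner_sum_left)
  qed
  have residual_le: "\<bar>g \<bullet> Phi y\<bar> \<le> norm g * Psi_coord \<sigma> e d d y" if "y \<in> space M" for y
    unfolding Psi_d using eigenfeature_orthonormal
    by (intro abs_inner_Phi_orthogonal_le[OF _ that]) (simp add: g_def finite_orthonormal_residual_orthogonal)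
  have "(norm h)\<^sup>2 \<le> 1" using h by (simp add: power_le_one)
  then have "(norm g)\<^sup>2 + (\<Sum>j<d. (h \<bullet> eigenfeature j)\<^sup>2) \<le> 1"
    using finite_orthonormal_Pythagoras[OF eigenfeature_orthonormal, of h d] unfolding g_def by linarith
  from abs_quad_error_le_L2_set[where \<psi>="Psi_coord \<sigma> e d" and a="\<lambda>j. h \<bullet> eigenfeature j"
      and r="\<lambda>y. g \<bullet> Phi y" and \<beta>="norm g", OF w x Psi_integrable _ decomp _ residual_le norm_ge_zero this]
  show ?thesis using tail_fun_nonneg unfolding Psi_d by simp
qed

end

theorem proposition5:
  fixes M :: "'a measure"
    and k :: "'a \<Rightarrow> 'a \<Rightarrow> real"
    and Phi :: "'a \<Rightarrow> 'h::{real_inner, complete_space}"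
    and \<kappa> :: real
    and \<sigma> :: "nat \<Rightarrow> real"
    and e :: "nat \<Rightarrow> 'a \<Rightarrow> real"
    and d N :: nat
    and x :: "nat \<Rightarrow> 'a"
    and w :: "nat \<Rightarrow> real"
    and \<epsilon> :: real
  assumes prob: "prob_space M"
    and feature: "\<And>y z. k y z = Phi y \<bullet> Phi z"
    and dense: "closure (span (range Phi)) = UNIV"
    and kappa_pos: "\<kappa> > 0"
    and kappa_bound: "\<And>y. y \<in> space M \<Longrightarrow> sqrt (k y y) \<le> \<kappa>"
    and e_meas: "\<And>j. e j \<in> borel_measurable M"
    and e_L2: "\<And>j. integrable M (\<lambda>y. (e j y)\<^sup>2)"
    and e_orthonormal: "\<And>i j. (\<integral>y. e i y * e j y \<partial>M) = (if i = j then 1 else 0)"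
    and \<sigma>_nonneg: "\<And>j. \<sigma> j \<ge> 0"
    and \<sigma>_decr: "decseq \<sigma>"
    and mercer: "\<And>y z. y \<in> space M \<Longrightarrow> z \<in> space M \<Longrightarrow>
                   (\<lambda>j. \<sigma> j * e j y * e j z) sums k y z"
    and d_pos: "d \<ge> 1"
    and x_in: "\<And>i. i < N \<Longrightarrow> x i \<in> space M"
    and w_simplex: "w \<in> prob_simplex N"
    and eps_nonneg: "\<epsilon> \<ge> 0"
    and approx: "L2_set (\<lambda>j. (\<integral>y. Psi_coord \<sigma> e d j y \<partial>M)
                             - (\<Sum>i<N. w i * Psi_coord \<sigma> e d j (x i))) {..d} \<le> \<epsilon>"
  shows "wce N w x Phi M \<le> 2 * (\<integral>y. tail_fun \<sigma> e d y \<partial>M) + \<epsilon>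
       \<and> 2 * (\<integral>y. tail_fun \<sigma> e d y \<partial>M) + \<epsilon> \<le> 2 * sqrt (\<Sum>j. \<sigma> (j + d)) + \<epsilon>"
proof -
  have "Mercer_expansion M Phi \<kappa> \<sigma> e"
  proof (intro Mercer_expansion.intro Mercer_expansion_axioms.intro)
    show "norm (Phi y) \<le> \<kappa>" if "y \<in> space M" for y
      using kappa_bound[OF that] by (simp add: feature norm_eq_sqrt_inner)
    show "(\<lambda>j. \<sigma> j * e j y * e j z) sums (Phi y \<bullet> Phi z)" if "y \<in> space M" "z \<in> space M" for y z
      using mercer[OF that] by (simp add: feature)
  qed (fact prob e_meas e_L2 e_orthonormal \<sigma>_nonneg)+
  then interpret Mercer_expansion M Phi \<kappa> \<sigma> e .
  have "wce N w x Phi M \<le> 2 * (\<integral>y. tail_fun \<sigma> e d y \<partial>M) + \<epsilon>"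
    unfolding wce_def
  proof (rule cSUP_least)
    show "{h::'h. norm h \<le> 1} \<noteq> {}" by (auto intro: exI[of _ 0])
    fix h :: 'h assume "h \<in> {h. norm h \<le> 1}"
    then show "\<bar>(\<integral>y. rkhs_fun Phi h y \<partial>M) - quad N w x (rkhs_fun Phi h)\<bar>
        \<le> 2 * (\<integral>y. tail_fun \<sigma> e d y \<partial>M) + \<epsilon>"
      using abs_quad_error_rkhs_fun_le[where x=x and h=h and d=d, OF w_simplex x_in] approx
      unfolding quad_error_def quad_def by simp
  qed
  then show ?thesis using integral_tail_fun_le by simp
qed

end
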